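(* If $H$ is a hyperplane in $\mathbb{R}^n$ and $0<b<1$, the Brock set map $\diamond_{B_H}$ with parameter $b$ cannot be weakly approximated on the class $\mathcal K^n_n$ of convex bodies by finite compositions of polarizations with respect to hyperplanes parallel to $H$.
   Context: For $H=u^\perp+t_0u$ oriented by the unit vector $u$, the Brock set map with parameter $b\in[0,1]$ maps a convex body $K$ to the set obtained by translating orthogonally to $H$ each chord of $K$ orthogonal to $H$, with midpoint at height $t$ (i.e. $\langle\cdot,u\rangle=t$), so that its midpoint lies at height $(1-b)t_0+bt$. Set polarization with respect to an oriented hyperplane $G$ (closed halfspaces $G^\pm$, reflection $A^\dagger$): $(P_GA)\cap G^+=(A\cup A^\dagger)\cap G^+$, $(P_GA)\cap G^-=(A\cap A^\dagger)\cap G^-$. Weak approximability on $\mathcal E$ by maps in $\mathcal G$: for every $A\in\mathcal E$ there are $\diamond_{A,k}\in\mathcal G$ with $\|1_{\diamond_{A,k}A}-1_{\diamond A}\|_1\to0$. *)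

theory Defs
  imports "HOL-Analysis.Analysis"
begin

definition convex_body :: "'a::euclidean_space set \<Rightarrow> bool" where
  "convex_body K \<longleftrightarrow> compact K \<and> convex K \<and> interior K \<noteq> {}"

definition chord_heights :: "'a::euclidean_space \<Rightarrow> 'a set \<Rightarrow> 'a \<Rightarrow> real set" where
  "chord_heights u A y = {z \<bullet> u | z. z \<in> A \<and> z - (z \<bullet> u) *\<^sub>R u = y - (y \<bullet> u) *\<^sub>R u}"

definition chord_mid :: "'a::euclidean_space \<Rightarrow> 'a set \<Rightarrow> 'a \<Rightarrow> real" where
  "chord_mid u A y = (Sup (chord_heights u A y) + Inf (chord_heights u A y)) / 2"

text \<open>Brock set map for H = u-perp + t0 u (u a unit vector) with parameter b: each chord
  orthogonal to H with midpoint at height t is translated along u so that its midpoint lies at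
  height (1-b) t0 + b t.\<close>
definition brock :: "'a::euclidean_space \<Rightarrow> real \<Rightarrow> real \<Rightarrow> 'a set \<Rightarrow> 'a set" where
  "brock u t0 b A = {y + ((1 - b) * (t0 - chord_mid u A y)) *\<^sub>R u | y. y \<in> A}"

text \<open>Oriented hyperplane G = {x. x \<bullet> v = s}, oriented by the unit vector v:
  closed halfspaces G+ = {x \<bullet> v \<ge> s}, G- = {x \<bullet> v \<le> s}; reflection in G.\<close>
definition refl_hp :: "'a::euclidean_space \<Rightarrow> real \<Rightarrow> 'a \<Rightarrow> 'a" where
  "refl_hp v s x = x - (2 * (x \<bullet> v - s)) *\<^sub>R v"

definition polarization :: "'a::euclidean_space \<Rightarrow> real \<Rightarrow> 'a set \<Rightarrow> 'a set" where
  "polarization v s A =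
     ((A \<union> refl_hp v s ` A) \<inter> {x. x \<bullet> v \<ge> s}) \<union>
     ((A \<inter> refl_hp v s ` A) \<inter> {x. x \<bullet> v \<le> s})"

fun polar_comp :: "('a::euclidean_space \<times> real) list \<Rightarrow> 'a set \<Rightarrow> 'a set" where
  "polar_comp [] A = A"
| "polar_comp ((v, s) # hs) A = polarization v s (polar_comp hs A)"

definition parallel_polar_comps :: "'a::euclidean_space \<Rightarrow> ('a set \<Rightarrow> 'a set) set" where
  "parallel_polar_comps u =
     {polar_comp hs | hs. \<forall>(v, s) \<in> set hs. v = u \<or> v = - u}"

definition ind_L1_dist :: "'a::euclidean_space set \<Rightarrow> 'a set \<Rightarrow> ennreal" where
  "ind_L1_dist A B = (\<integral>\<^sup>+ x. ennreal \<bar>indicator A x - indicator B x\<bar> \<partial>lebesgue)"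

definition weakly_approximable ::
  "'a::euclidean_space set set \<Rightarrow> ('a set \<Rightarrow> 'a set) set \<Rightarrow> ('a set \<Rightarrow> 'a set) \<Rightarrow> bool" where
  "weakly_approximable E G D \<longleftrightarrow>
     (\<forall>A \<in> E. \<exists>F :: nat \<Rightarrow> 'a set \<Rightarrow> 'a set. (\<forall>k. F k \<in> G) \<and>
        (\<lambda>k. ind_L1_dist (F k A) (D A)) \<longlonglongrightarrow> 0)"

end

theory Submission
  imports Defs
begin

text \<open>
  Test everything on one convex body: with \<open>w\<close> a unit vector orthogonal to \<open>u\<close> and \<open>x'\<close> the
  component of \<open>x\<close> orthogonal to \<open>u\<close>, let \<open>K = {x. |x'| \<le> 1, |x \<bullet> u - x \<bullet> w| \<le> 1}\<close>.
  Its chords orthogonal to \<open>H\<close> all have length 2 and midpoint at height \<open>c (x \<bullet> w)\<close>, with the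
  profile \<open>c m = m\<close>. The Brock map replaces the profile by the line \<open>(1 - b) t0 + b m\<close> of slope
  \<open>b\<close>, while a polarization in a hyperplane parallel to \<open>H\<close> replaces it by a fold
  \<open>s + |c m - s|\<close> (or the mirror image), so finite compositions give profiles \<open>G m\<close> with \<open>G\<close>
  a composition of folds.

  If such a \<open>G\<close> were uniformly close to the line of slope \<open>b\<close> on \<open>[-1/2, 1/2]\<close>, its level
  sets would be short. Then no fold can have its crease inside the shrunken interval: that would
  create an interior extremum, whose level set is long by the intermediate value theorem. Hence
  \<open>G\<close> has slope 1 or -1 on a long interval, contradicting closeness to slope \<open>b\<close>.
  A gap between the profiles gives a ball of fixed radius in the symmetric difference, so the
  L1 distance stays bounded away from 0.
\<close>

section \<open>Compositions of folds of the real line\<close>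

text \<open>
  \<open>folding 1 s\<close> and \<open>folding (-1) s\<close> are the folds of heights caused by polarizing in
  \<open>{x. x \<bullet> u = s}\<close> oriented by \<open>u\<close> and in \<open>{x. x \<bullet> (-u) = s}\<close> oriented by \<open>-u\<close>.
\<close>

definition folding :: "real \<Rightarrow> real \<Rightarrow> real \<Rightarrow> real" where
  "folding \<epsilon> s y = \<epsilon> * (s + \<bar>\<epsilon> * y - s\<bar>)"

lemma folding_nonexpanding:
  assumes "\<bar>\<epsilon>\<bar> = 1"
  shows "\<bar>folding \<epsilon> s x - folding \<epsilon> s y\<bar> \<le> \<bar>x - y\<bar>"
proof -
  have "\<bar>folding \<epsilon> s x - folding \<epsilon> s y\<bar> = \<bar>\<bar>\<epsilon> * x - s\<bar> - \<bar>\<epsilon> * y - s\<bar>\<bar>"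
    using assms by (simp add: folding_def abs_mult flip: right_diff_distrib)
  also have "\<dots> \<le> \<bar>\<epsilon> * x - \<epsilon> * y\<bar>"
    by (rule order_trans[OF abs_triangle_ineq3]) simp
  also have "\<dots> = \<bar>x - y\<bar>"
    using assms by (simp add: abs_mult flip: right_diff_distrib)
  finally show ?thesis .
qed

definition small_fibres_on :: "real set \<Rightarrow> (real \<Rightarrow> real) \<Rightarrow> real \<Rightarrow> bool" where
  "small_fibres_on I g r \<longleftrightarrow> (\<forall>x\<in>I. \<forall>y\<in>I. g x = g y \<longrightarrow> \<bar>x - y\<bar> < r)"

lemma IVT_equal_values_apart:
  fixes g :: "real \<Rightarrow> real"
  assumes cont: "continuous_on {x0 - r..x0 + r} g" and "0 \<le> r"
    and left: "g x0 \<le> g (x0 - r)" and right: "g x0 \<le> g (x0 + r)"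
  obtains p q where "x0 - r \<le> p" "q \<le> x0 + r" "r \<le> q - p" "g p = g q"
proof (cases "g (x0 - r) \<le> g (x0 + r)")
  case True
  have "continuous_on {x0..x0 + r} g"
    using cont by (rule continuous_on_subset) auto
  then obtain q where "x0 \<le> q" "q \<le> x0 + r" "g q = g (x0 - r)"
    using IVT'[of g x0 "g (x0 - r)" "x0 + r"] left True \<open>0 \<le> r\<close> by auto
  then show ?thesis
    using that[of "x0 - r" q] by auto
next
  case False
  have "continuous_on {x0 - r..x0} g"
    using cont by (rule continuous_on_subset) auto
  then obtain p where "x0 - r \<le> p" "p \<le> x0" "g p = g (x0 + r)"
    using IVT2'[where f = g and a = "x0 - r" and b = x0 and y = "g (x0 + r)"] right False \<open>0 \<le> r\<close> by auto
  then show ?thesis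
    using that[of p "x0 + r"] by auto
qed

lemma small_fibres_on_no_interior_min:
  fixes g :: "real \<Rightarrow> real"
  assumes cont: "continuous_on {a..b} g" and small: "small_fibres_on {a..b} g r" and "0 \<le> r"
    and x0: "x0 \<in> {a + r..b - r}" and min: "\<forall>y\<in>{a..b}. g x0 \<le> g y"
  shows False
proof -
  have sub: "{x0 - r..x0 + r} \<subseteq> {a..b}"
    using x0 by auto
  have "g x0 \<le> g (x0 - r)" "g x0 \<le> g (x0 + r)"
    using min sub \<open>0 \<le> r\<close> by auto
  then obtain p q where "x0 - r \<le> p" "q \<le> x0 + r" "r \<le> q - p" "g p = g q"
    by (rule IVT_equal_values_apart[OF continuous_on_subset[OF cont sub] \<open>0 \<le> r\<close>])
  moreover have "\<bar>p - q\<bar> < r" if "p \<in> {a..b}" "q \<in> {a..b}" "g p = g q"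
    using small that unfolding small_fibres_on_def by blast
  ultimately show False
    using sub by auto
qed

lemma abs_diff_affine_off_interval:
  fixes x0 :: real
  assumes "x0 \<notin> {lo..hi}"
  obtains \<tau> e where "\<bar>\<tau>\<bar> = 1" "\<forall>x\<in>{lo..hi}. \<bar>x - x0\<bar> = \<tau> * x + e"
proof (cases "x0 < lo")
  case True
  then show thesis
    using that[of 1 "- x0"] by auto
next
  case False
  then show thesis
    using that[of "-1" x0] assms by auto
qed

lemma folding_affine_on:
  fixes g :: "real \<Rightarrow> real"
  assumes \<epsilon>: "\<bar>\<epsilon>\<bar> = 1" and \<sigma>: "\<bar>\<sigma>\<bar> = 1" and "0 \<le> r"
    and cont: "continuous_on {a..b} g"
    and small: "small_fibres_on {a..b} (\<lambda>x. folding \<epsilon> s (g x)) r"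
    and affine: "\<forall>x\<in>{a + r..b - r}. g x = \<sigma> * x + c"
  obtains \<sigma>' c' where "\<bar>\<sigma>'\<bar> = 1" "\<forall>x\<in>{a + r..b - r}. folding \<epsilon> s (g x) = \<sigma>' * x + c'"
proof -
  have \<epsilon>\<epsilon>: "\<epsilon> * \<epsilon> = 1" and \<sigma>\<sigma>: "\<sigma> * \<sigma> = 1"
    using \<epsilon> \<sigma> by (metis abs_mult_self_eq mult_1)+
  define x0 where "x0 = \<epsilon> * \<sigma> * (s - \<epsilon> * c)"
  have dist: "\<bar>\<epsilon> * g x - s\<bar> = \<bar>x - x0\<bar>" if "x \<in> {a + r..b - r}" for x
  proof -
    have "\<epsilon> * \<sigma> * (x - x0) = \<epsilon> * \<sigma> * x - (\<epsilon> * \<epsilon>) * (\<sigma> * \<sigma>) * (s - \<epsilon> * c)"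
      by (simp add: x0_def algebra_simps)
    also have "\<dots> = \<epsilon> * (\<sigma> * x + c) - s"
      using \<epsilon>\<epsilon> \<sigma>\<sigma> by (simp add: algebra_simps)
    finally have "\<epsilon> * g x - s = \<epsilon> * \<sigma> * (x - x0)"
      using affine that by simp
    then show ?thesis
      by (simp add: abs_mult \<epsilon> \<sigma>)
  qed
  have x0: "x0 \<notin> {a + r..b - r}"
  proof
    assume x0: "x0 \<in> {a + r..b - r}"
    \<comment> \<open>the crease \<open>x0\<close> is an interior minimum point of \<open>\<epsilon> * folding \<epsilon> s \<circ> g = s + \<bar>\<epsilon> * g - s\<bar>\<close>\<close>
    have "continuous_on {a..b} (\<lambda>x. \<epsilon> * folding \<epsilon> s (g x))"
      using cont by (auto simp: folding_def intro!: continuous_intros)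
    moreover have "small_fibres_on {a..b} (\<lambda>x. \<epsilon> * folding \<epsilon> s (g x)) r"
      using small \<epsilon> by (auto simp: small_fibres_on_def)
    moreover have "\<epsilon> * folding \<epsilon> s (g x) = s + \<bar>\<epsilon> * g x - s\<bar>" for x
      using \<epsilon>\<epsilon> by (simp add: folding_def)
    then have "\<forall>y\<in>{a..b}. \<epsilon> * folding \<epsilon> s (g x0) \<le> \<epsilon> * folding \<epsilon> s (g y)"
      using dist[OF x0] by simp
    ultimately show False
      using small_fibres_on_no_interior_min x0 \<open>0 \<le> r\<close> by blast
  qed
  then obtain \<tau> e where "\<bar>\<tau>\<bar> = 1" and "\<forall>x\<in>{a + r..b - r}. \<bar>x - x0\<bar> = \<tau> * x + e"
    by (rule abs_diff_affine_off_interval)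
  then show thesis
    using that[of "\<epsilon> * \<tau>" "\<epsilon> * (s + e)"] dist \<epsilon>
    by (simp add: folding_def abs_mult algebra_simps)
qed

fun fold_comp :: "'a \<Rightarrow> ('a \<times> real) list \<Rightarrow> real \<Rightarrow> real" where
  "fold_comp u [] y = y"
| "fold_comp u ((v, s) # hs) y = folding (if v = u then 1 else -1) s (fold_comp u hs y)"

lemma fold_comp_nonexpanding: "\<bar>fold_comp u hs x - fold_comp u hs y\<bar> \<le> \<bar>x - y\<bar>"
proof (induction hs)
  case (Cons h hs)
  then show ?case
    by (cases h) (auto intro: order_trans[OF folding_nonexpanding])
qed simp

lemma continuous_on_fold_comp: "continuous_on A (fold_comp u hs)"
proof (induction hs)
  case (Cons h hs)
  then show ?case
    by (cases h) (auto simp: folding_def intro!: continuous_intros)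
qed simp

lemma fold_comp_affine_on:
  assumes "small_fibres_on {a..b} (fold_comp u hs) r" and "0 \<le> r"
  shows "\<exists>\<sigma> c. \<bar>\<sigma>\<bar> = 1 \<and> (\<forall>x\<in>{a + r..b - r}. fold_comp u hs x = \<sigma> * x + c)"
  using assms(1)
proof (induction hs)
  case Nil
  show ?case
    by (rule exI[of _ 1], rule exI[of _ 0]) simp
next
  case (Cons h hs)
  obtain v s where h: "h = (v, s)"
    by fastforce
  define \<epsilon> :: real where "\<epsilon> = (if v = u then 1 else -1)"
  have small: "small_fibres_on {a..b} (\<lambda>x. folding \<epsilon> s (fold_comp u hs x)) r"
    using Cons.prems by (simp add: h \<epsilon>_def)
  then have "small_fibres_on {a..b} (fold_comp u hs) r"
    by (auto simp: small_fibres_on_def)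
  then obtain \<sigma> c where "\<bar>\<sigma>\<bar> = 1" "\<forall>x\<in>{a + r..b - r}. fold_comp u hs x = \<sigma> * x + c"
    using Cons.IH by blast
  moreover have "\<bar>\<epsilon>\<bar> = 1"
    by (simp add: \<epsilon>_def)
  ultimately obtain \<sigma>' c'
    where "\<bar>\<sigma>'\<bar> = 1" "\<forall>x\<in>{a + r..b - r}. folding \<epsilon> s (fold_comp u hs x) = \<sigma>' * x + c'"
    using folding_affine_on[where g = "fold_comp u hs", OF _ _ \<open>0 \<le> r\<close> continuous_on_fold_comp small]
    by blast
  then show ?case
    by (auto simp: h \<epsilon>_def)
qed

lemma small_fibres_on_if_close_to_affine:
  fixes G :: "real \<Rightarrow> real"
  assumes "0 < b" and close: "\<forall>m\<in>I. \<bar>G m - (c + b * m)\<bar> < b * r / 2"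
  shows "small_fibres_on I G r"
  unfolding small_fibres_on_def
proof (intro ballI impI)
  fix x y
  assume x: "x \<in> I" and y: "y \<in> I" and "G x = G y"
  then have "b * (x - y) = (G y - (c + b * y)) - (G x - (c + b * x))"
    by (simp add: algebra_simps)
  then have "\<bar>b * (x - y)\<bar> \<le> \<bar>G y - (c + b * y)\<bar> + \<bar>G x - (c + b * x)\<bar>"
    by (metis abs_triangle_ineq4)
  moreover have "\<bar>b * (x - y)\<bar> = b * \<bar>x - y\<bar>"
    using \<open>0 < b\<close> by (simp add: abs_mult)
  moreover have "\<bar>G x - (c + b * x)\<bar> < b * r / 2" "\<bar>G y - (c + b * y)\<bar> < b * r / 2"
    using close x y by auto
  ultimately have "b * \<bar>x - y\<bar> < b * r"
    by linarith
  then show "\<bar>x - y\<bar> < r"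
    using \<open>0 < b\<close> by simp
qed

lemma slope_gap_if_close_to_affine:
  fixes G :: "real \<Rightarrow> real"
  assumes "G lo = \<sigma> * lo + d" and "G hi = \<sigma> * hi + d" and "lo \<le> hi"
    and "\<bar>G lo - (c + b * lo)\<bar> < \<delta>" and "\<bar>G hi - (c + b * hi)\<bar> < \<delta>"
  shows "\<bar>\<sigma> - b\<bar> * (hi - lo) < 2 * \<delta>"
proof -
  have "(\<sigma> - b) * (hi - lo) = (G hi - (c + b * hi)) - (G lo - (c + b * lo))"
    using assms(1,2) by (simp add: algebra_simps)
  then have "\<bar>(\<sigma> - b) * (hi - lo)\<bar> \<le> \<bar>G hi - (c + b * hi)\<bar> + \<bar>G lo - (c + b * lo)\<bar>"
    by (metis abs_triangle_ineq4)
  moreover have "\<bar>(\<sigma> - b) * (hi - lo)\<bar> = \<bar>\<sigma> - b\<bar> * (hi - lo)"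
    using \<open>lo \<le> hi\<close> by (simp add: abs_mult)
  ultimately show ?thesis
    using assms(4,5) by linarith
qed

lemma fold_comp_far_from_affine:
  assumes "0 < b" "b < 1"
  shows "\<exists>m\<in>{-1/2..1/2}. b * (1 - b) / 8 \<le> \<bar>fold_comp u hs m - (c + b * m)\<bar>"
proof (rule ccontr)
  define r where "r = (1 - b) / 4"
  assume "\<not> ?thesis"
  then have close: "\<forall>m\<in>{-1/2..1/2}. \<bar>fold_comp u hs m - (c + b * m)\<bar> < b * r / 2"
    by (auto simp: r_def not_le)
  then have "small_fibres_on {-1/2..1/2} (fold_comp u hs) r"
    by (rule small_fibres_on_if_close_to_affine[OF \<open>0 < b\<close>])
  then obtain \<sigma> d where \<sigma>: "\<bar>\<sigma>\<bar> = 1"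
    and affine: "\<forall>x\<in>{-1/2 + r..1/2 - r}. fold_comp u hs x = \<sigma> * x + d"
    using fold_comp_affine_on assms by (fastforce simp: r_def)
  define lo where "lo = -1/2 + r"
  define hi where "hi = 1/2 - r"
  have lohi: "lo \<in> {-1/2..1/2}" "hi \<in> {-1/2..1/2}" "lo \<le> hi"
    using assms by (auto simp: lo_def hi_def r_def)
  have "fold_comp u hs lo = \<sigma> * lo + d" "fold_comp u hs hi = \<sigma> * hi + d"
    using affine \<open>lo \<le> hi\<close> by (simp_all add: lo_def hi_def)
  moreover have "\<bar>fold_comp u hs lo - (c + b * lo)\<bar> < b * r / 2"
    "\<bar>fold_comp u hs hi - (c + b * hi)\<bar> < b * r / 2"
    using close lohi by blast+
  ultimately have "\<bar>\<sigma> - b\<bar> * (hi - lo) < 2 * (b * r / 2)"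
    using slope_gap_if_close_to_affine[where G = "fold_comp u hs"] \<open>lo \<le> hi\<close> by blast
  moreover have "(1 - b) * (hi - lo) \<le> \<bar>\<sigma> - b\<bar> * (hi - lo)"
    using \<sigma> \<open>lo \<le> hi\<close> assms by (intro mult_right_mono) auto
  ultimately have "(1 - b) * ((1 + b) / 2) < (1 - b) * (b / 4)"
    by (simp add: lo_def hi_def r_def field_simps)
  then show False
    using assms by simp
qed

section \<open>Reflections and polarizations\<close>

abbreviation perp_part :: "'a::real_inner \<Rightarrow> 'a \<Rightarrow> 'a" where
  "perp_part u x \<equiv> x - (x \<bullet> u) *\<^sub>R u"

lemma
  fixes u :: "'a::real_inner"
  assumes "norm u = 1"
  shows inner_perp_part_unit: "perp_part u x \<bullet> u = 0"
    and inner_add_scaleR_unit: "(x + a *\<^sub>R u) \<bullet> u = x \<bullet> u + a"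
    and perp_part_add_scaleR_unit: "perp_part u (x + a *\<^sub>R u) = perp_part u x"
proof -
  have uu: "u \<bullet> u = 1"
    using assms by (simp add: norm_eq_1)
  show "perp_part u x \<bullet> u = 0" and 1: "(x + a *\<^sub>R u) \<bullet> u = x \<bullet> u + a"
    by (simp_all add: uu inner_diff_left inner_add_left)
  show "perp_part u (x + a *\<^sub>R u) = perp_part u x"
    unfolding 1 by (simp add: algebra_simps)
qed

lemma norm_perp_part_le:
  fixes u :: "'a::real_inner"
  assumes "norm u = 1"
  shows "norm (perp_part u x) \<le> norm x"
proof -
  have "u \<bullet> u = 1"
    using assms by (simp add: norm_eq_1)
  then have "perp_part u x \<bullet> perp_part u x = x \<bullet> x - (x \<bullet> u)\<^sup>2"
    by (simp add: inner_diff_left inner_diff_right inner_commute power2_eq_square)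
  then have "(norm (perp_part u x))\<^sup>2 = (norm x)\<^sup>2 - (x \<bullet> u)\<^sup>2"
    by (simp only: power2_norm_eq_inner)
  then have "(norm (perp_part u x))\<^sup>2 \<le> (norm x)\<^sup>2"
    using zero_le_power2[of "x \<bullet> u"] by linarith
  then show ?thesis
    using norm_ge_zero by (rule power2_le_imp_le)
qed

lemma
  fixes u w :: "'a::real_inner"
  assumes "w \<bullet> u = 0"
  shows inner_perp_part_orth: "perp_part u x \<bullet> w = x \<bullet> w"
    and inner_add_scaleR_orth: "(x + a *\<^sub>R u) \<bullet> w = x \<bullet> w"
proof -
  have "u \<bullet> w = 0"
    using assms by (simp add: inner_commute)
  then show "perp_part u x \<bullet> w = x \<bullet> w" and "(x + a *\<^sub>R u) \<bullet> w = x \<bullet> w"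
    by (simp_all add: inner_diff_left inner_add_left)
qed

lemma refl_hp_eq: "refl_hp v s x = x + (2 * (s - x \<bullet> v)) *\<^sub>R v"
  by (simp add: refl_hp_def algebra_simps)

lemma
  fixes v :: "'a::euclidean_space"
  assumes "norm v = 1"
  shows inner_refl_hp_unit: "refl_hp v s x \<bullet> v = 2 * s - x \<bullet> v"
    and perp_part_refl_hp: "perp_part v (refl_hp v s x) = perp_part v x"
    and refl_hp_refl_hp: "refl_hp v s (refl_hp v s x) = x"
proof -
  show inner: "refl_hp v s x \<bullet> v = 2 * s - x \<bullet> v"
    by (simp add: refl_hp_eq inner_add_scaleR_unit[OF assms])
  show "perp_part v (refl_hp v s x) = perp_part v x"
    unfolding refl_hp_eq by (rule perp_part_add_scaleR_unit[OF assms])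
  have "refl_hp v s (refl_hp v s x) = refl_hp v s x + (2 * (x \<bullet> v - s)) *\<^sub>R v"
    unfolding refl_hp_eq[of v s "refl_hp v s x"] inner by simp
  also have "\<dots> = x + (2 * (s - x \<bullet> v) + 2 * (x \<bullet> v - s)) *\<^sub>R v"
    unfolding refl_hp_eq scaleR_add_left by simp
  finally show "refl_hp v s (refl_hp v s x) = x"
    by simp
qed

lemma mem_polarization_iff:
  fixes v :: "'a::euclidean_space"
  assumes "norm v = 1"
  shows "x \<in> polarization v s A \<longleftrightarrow>
    (s \<le> x \<bullet> v \<and> (x \<in> A \<or> refl_hp v s x \<in> A)) \<or> (x \<bullet> v \<le> s \<and> x \<in> A \<and> refl_hp v s x \<in> A)"
proof -
  have "x \<in> refl_hp v s ` A \<longleftrightarrow> refl_hp v s x \<in> A"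
    using refl_hp_refl_hp[OF assms] by (metis image_iff)
  then show ?thesis
    unfolding polarization_def by auto
qed

section \<open>Sheared cylinders\<close>

text \<open>
  In \<open>sheared_cylinder u w c\<close> the chord through \<open>x\<close> orthogonal to \<open>u\<^sup>\<perp>\<close> has heights
  \<open>[c (x \<bullet> w) - 1, c (x \<bullet> w) + 1]\<close>; Brock maps and parallel polarizations act only on the
  profile \<open>c\<close>.
\<close>

definition sheared_cylinder :: "'a::euclidean_space \<Rightarrow> 'a \<Rightarrow> (real \<Rightarrow> real) \<Rightarrow> 'a set" where
  "sheared_cylinder u w c = {x. norm (perp_part u x) \<le> 1 \<and> \<bar>x \<bullet> u - c (x \<bullet> w)\<bar> \<le> 1}"

lemma sheared_cylinder_uminus: "sheared_cylinder (- u) w c = sheared_cylinder u w (\<lambda>m. - c m)"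
proof -
  have "\<bar>- a - b\<bar> = \<bar>a + b\<bar>" for a b :: real
    by arith
  then show ?thesis
    unfolding sheared_cylinder_def by simp
qed

text \<open>The left-hand side says that \<open>t\<close> lies in the polarization at \<open>s\<close> of \<open>[c - 1, c + 1]\<close>.\<close>

lemma polarized_interval_iff:
  fixes s t c :: real
  shows "(s \<le> t \<and> (\<bar>t - c\<bar> \<le> 1 \<or> \<bar>2 * s - t - c\<bar> \<le> 1)) \<or>
      (t \<le> s \<and> \<bar>t - c\<bar> \<le> 1 \<and> \<bar>2 * s - t - c\<bar> \<le> 1) \<longleftrightarrow>
    \<bar>t - (s + \<bar>c - s\<bar>)\<bar> \<le> 1"
  by (cases "c \<le> s") (auto simp: abs_le_iff)

lemma polarization_sheared_cylinder:
  fixes v w :: "'a::euclidean_space"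
  assumes v: "norm v = 1" and wv: "w \<bullet> v = 0"
  shows "polarization v s (sheared_cylinder v w c) = sheared_cylinder v w (\<lambda>m. s + \<bar>c m - s\<bar>)"
proof (rule set_eqI)
  fix x
  let ?P = "norm (perp_part v x) \<le> 1"
  have "refl_hp v s x \<bullet> w = x \<bullet> w"
    using wv by (simp add: refl_hp_eq inner_add_scaleR_orth)
  then have refl_mem: "refl_hp v s x \<in> sheared_cylinder v w c \<longleftrightarrow>
      ?P \<and> \<bar>2 * s - x \<bullet> v - c (x \<bullet> w)\<bar> \<le> 1"
    unfolding sheared_cylinder_def mem_Collect_eq perp_part_refl_hp[OF v]
    unfolding inner_refl_hp_unit[OF v] by simp
  have mem: "x \<in> sheared_cylinder v w c' \<longleftrightarrow> ?P \<and> \<bar>x \<bullet> v - c' (x \<bullet> w)\<bar> \<le> 1" for c'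
    by (simp add: sheared_cylinder_def)
  show "x \<in> polarization v s (sheared_cylinder v w c) \<longleftrightarrow>
      x \<in> sheared_cylinder v w (\<lambda>m. s + \<bar>c m - s\<bar>)"
    unfolding mem_polarization_iff[OF v] refl_mem mem polarized_interval_iff[symmetric]
    by blast
qed

lemma polarization_parallel_sheared_cylinder:
  fixes u w :: "'a::euclidean_space"
  assumes u: "norm u = 1" and wu: "w \<bullet> u = 0" and v: "v = u \<or> v = - u"
  shows "polarization v s (sheared_cylinder u w c) =
    sheared_cylinder u w (\<lambda>m. folding (if v = u then 1 else -1) s (c m))"
proof (cases "v = u")
  case True
  then show ?thesis
    by (simp add: polarization_sheared_cylinder[OF u wu] folding_def)
next
  case False
  then have v: "v = - u"
    using v by simp
  have "polarization v s (sheared_cylinder u w c) = polarization v s (sheared_cylinder v w (\<lambda>m. - c m))"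
    by (simp add: v sheared_cylinder_uminus)
  also have "\<dots> = sheared_cylinder v w (\<lambda>m. s + \<bar>- c m - s\<bar>)"
    using polarization_sheared_cylinder[of v w] u wu by (simp add: v)
  also have "\<dots> = sheared_cylinder u w (\<lambda>m. folding (-1) s (c m))"
    by (simp add: v sheared_cylinder_uminus folding_def)
  finally show ?thesis
    using False by simp
qed

lemma polar_comp_sheared_cylinder:
  fixes u w :: "'a::euclidean_space"
  assumes u: "norm u = 1" and wu: "w \<bullet> u = 0" and hs: "\<forall>(v, s) \<in> set hs. v = u \<or> v = - u"
  shows "polar_comp hs (sheared_cylinder u w c) = sheared_cylinder u w (\<lambda>m. fold_comp u hs (c m))"
  using hs
proof (induction hs)
  case (Cons h hs)
  then show ?case
    by (cases h) (simp add: polarization_parallel_sheared_cylinder[OF u wu])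
qed simp

lemma chord_heights_sheared_cylinder:
  fixes u w y :: "'a::euclidean_space"
  assumes u: "norm u = 1" and wu: "w \<bullet> u = 0" and y: "y \<in> sheared_cylinder u w c"
  shows "chord_heights u (sheared_cylinder u w c) y = {c (y \<bullet> w) - 1..c (y \<bullet> w) + 1}"
proof (intro set_eqI iffI)
  fix t
  assume "t \<in> chord_heights u (sheared_cylinder u w c) y"
  then obtain z where "t = z \<bullet> u" "z \<in> sheared_cylinder u w c" "perp_part u z = perp_part u y"
    unfolding chord_heights_def by blast
  moreover from this(3) have "z \<bullet> w = y \<bullet> w"
    by (metis inner_perp_part_orth[OF wu])
  ultimately show "t \<in> {c (y \<bullet> w) - 1..c (y \<bullet> w) + 1}"
    by (auto simp: sheared_cylinder_def abs_le_iff)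
next
  fix t
  assume t: "t \<in> {c (y \<bullet> w) - 1..c (y \<bullet> w) + 1}"
  define z where "z = perp_part u y + t *\<^sub>R u"
  have "z \<bullet> u = t" "z \<bullet> w = y \<bullet> w" "perp_part u z = perp_part u y"
    unfolding z_def
    by (simp_all add: inner_add_scaleR_unit[OF u] inner_perp_part_unit[OF u]
        inner_add_scaleR_orth[OF wu] inner_perp_part_orth[OF wu] perp_part_add_scaleR_unit[OF u])
  then show "t \<in> chord_heights u (sheared_cylinder u w c) y"
    using y t unfolding chord_heights_def sheared_cylinder_def by (force simp: abs_le_iff)
qed

lemma chord_mid_sheared_cylinder:
  fixes u w y :: "'a::euclidean_space"
  assumes "norm u = 1" and "w \<bullet> u = 0" and "y \<in> sheared_cylinder u w c"
  shows "chord_mid u (sheared_cylinder u w c) y = c (y \<bullet> w)"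
  by (simp add: chord_mid_def chord_heights_sheared_cylinder[OF assms])

lemma brock_sheared_cylinder:
  fixes u w :: "'a::euclidean_space"
  assumes u: "norm u = 1" and wu: "w \<bullet> u = 0"
  shows "brock u t0 b (sheared_cylinder u w c) = sheared_cylinder u w (\<lambda>m. (1 - b) * t0 + b * c m)"
proof -
  let ?f = "\<lambda>y. y + ((1 - b) * (t0 - c (y \<bullet> w))) *\<^sub>R u"
  note shift = inner_add_scaleR_unit[OF u] inner_add_scaleR_orth[OF wu]
  note perp_shift = perp_part_add_scaleR_unit[OF u]
  have "brock u t0 b (sheared_cylinder u w c) = ?f ` sheared_cylinder u w c"
    unfolding brock_def Setcompr_eq_image
    by (rule image_cong) (simp_all add: chord_mid_sheared_cylinder[OF u wu])
  also have "\<dots> = sheared_cylinder u w (\<lambda>m. (1 - b) * t0 + b * c m)"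
  proof (intro set_eqI iffI)
    fix x
    assume "x \<in> ?f ` sheared_cylinder u w c"
    then obtain y where y: "y \<in> sheared_cylinder u w c" and x: "x = ?f y"
      by blast
    have "x \<bullet> u - ((1 - b) * t0 + b * c (x \<bullet> w)) = y \<bullet> u - c (y \<bullet> w)"
      unfolding x shift by (simp add: algebra_simps)
    moreover have "perp_part u x = perp_part u y"
      unfolding x by (rule perp_shift)
    ultimately show "x \<in> sheared_cylinder u w (\<lambda>m. (1 - b) * t0 + b * c m)"
      using y by (simp add: sheared_cylinder_def)
  next
    fix x
    assume x: "x \<in> sheared_cylinder u w (\<lambda>m. (1 - b) * t0 + b * c m)"
    define y where "y = x + (- ((1 - b) * (t0 - c (x \<bullet> w)))) *\<^sub>R u"
    have yw: "y \<bullet> w = x \<bullet> w"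
      unfolding y_def shift ..
    have "y \<bullet> u - c (y \<bullet> w) = x \<bullet> u - ((1 - b) * t0 + b * c (x \<bullet> w))"
      unfolding yw unfolding y_def shift by (simp add: algebra_simps)
    moreover have "perp_part u y = perp_part u x"
      unfolding y_def by (rule perp_shift)
    ultimately have "y \<in> sheared_cylinder u w c"
      using x by (simp add: sheared_cylinder_def)
    moreover have "x = ?f y"
      unfolding yw by (simp add: y_def)
    ultimately show "x \<in> ?f ` sheared_cylinder u w c"
      by blast
  qed
  finally show ?thesis .
qed

lemma abs_inner_le_norm_unit:
  fixes x v :: "'a::real_inner"
  assumes "norm v = 1"
  shows "\<bar>x \<bullet> v\<bar> \<le> norm x"
  using Cauchy_Schwarz_ineq2[of x v] assms by simp

lemma sheared_cylinder_subset_cball: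
  fixes u w :: "'a::euclidean_space"
  assumes u: "norm u = 1" and w: "norm w = 1" and wu: "w \<bullet> u = 0"
  shows "sheared_cylinder u w (\<lambda>m. m) \<subseteq> cball 0 3"
proof
  fix x
  assume x: "x \<in> sheared_cylinder u w (\<lambda>m. m)"
  then have "\<bar>x \<bullet> w\<bar> \<le> 1"
    using abs_inner_le_norm_unit[OF w, of "perp_part u x"]
    by (simp add: sheared_cylinder_def inner_perp_part_orth[OF wu])
  then have "\<bar>x \<bullet> u\<bar> \<le> 2"
    using x by (auto simp: sheared_cylinder_def)
  moreover have "norm x \<le> norm (perp_part u x) + norm ((x \<bullet> u) *\<^sub>R u)"
    using norm_triangle_ineq[of "perp_part u x" "(x \<bullet> u) *\<^sub>R u"] by simp
  ultimately show "x \<in> cball 0 3"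
    using x u by (simp add: sheared_cylinder_def)
qed

lemma ball_subset_sheared_cylinder:
  fixes u w :: "'a::euclidean_space"
  assumes u: "norm u = 1" and w: "norm w = 1"
  shows "ball 0 (1/3) \<subseteq> sheared_cylinder u w (\<lambda>m. m)"
proof
  fix x :: 'a
  assume "x \<in> ball 0 (1/3)"
  then have "norm x < 1/3"
    by simp
  moreover have "norm (perp_part u x) \<le> norm x" "\<bar>x \<bullet> u\<bar> \<le> norm x" "\<bar>x \<bullet> w\<bar> \<le> norm x"
    using norm_perp_part_le[OF u] abs_inner_le_norm_unit[OF u] abs_inner_le_norm_unit[OF w] by auto
  ultimately show "x \<in> sheared_cylinder u w (\<lambda>m. m)"
    by (simp add: sheared_cylinder_def abs_le_iff)
qed

lemma convex_body_sheared_cylinder: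
  fixes u w :: "'a::euclidean_space"
  assumes u: "norm u = 1" and w: "norm w = 1" and wu: "w \<bullet> u = 0"
  shows "convex_body (sheared_cylinder u w (\<lambda>m. m))"
proof -
  let ?S = "sheared_cylinder u w (\<lambda>m. m)"
  have S: "?S = perp_part u -` cball 0 1 \<inter> {x. (u - w) \<bullet> x \<le> 1} \<inter> {x. (w - u) \<bullet> x \<le> 1}"
    by (auto simp: sheared_cylinder_def inner_diff_left inner_diff_right inner_commute abs_le_iff)
  have "linear (perp_part u)"
    by (rule linearI) (simp_all add: inner_add_left algebra_simps)
  then have "convex ?S"
    unfolding S by (intro convex_Int convex_linear_vimage convex_cball convex_halfspace_le)
  moreover have "closed ?S"
    unfolding sheared_cylinder_def by (intro closed_Collect_conj closed_Collect_le continuous_intros)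
  moreover have "bounded ?S"
    by (rule bounded_subset[OF bounded_cball sheared_cylinder_subset_cball[OF u w wu]])
  moreover have "interior ?S \<noteq> {}"
    using interior_maximal[OF ball_subset_sheared_cylinder[OF u w]] by fastforce
  ultimately show ?thesis
    unfolding convex_body_def by (simp add: compact_eq_bounded_closed)
qed

lemma sheared_cylinder_diff_contains_ball:
  fixes u w :: "'a::euclidean_space" and G h :: "real \<Rightarrow> real"
  assumes u: "norm u = 1" and w: "norm w = 1" and wu: "w \<bullet> u = 0"
    and m: "\<bar>m\<bar> \<le> 1/2" and e: "0 < e" "e \<le> 1" and gap: "e \<le> \<bar>G m - h m\<bar>"
    and G: "\<And>x y. \<bar>G x - G y\<bar> \<le> \<bar>x - y\<bar>" and h: "\<And>x y. \<bar>h x - h y\<bar> \<le> \<bar>x - y\<bar>"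
  obtains p where "ball p (e/4) \<subseteq> sheared_cylinder u w h - sheared_cylinder u w G"
proof -
  \<comment> \<open>over \<open>m\<close> the chords have half-length 1 and centres at least \<open>e\<close> apart: put \<open>p\<close> at
    distance \<open>e/2\<close> inside the end of the \<open>h\<close>-chord that sticks out of the \<open>G\<close>-chord\<close>
  define a where "a = (if h m \<le> G m then h m - 1 + e/2 else h m + 1 - e/2)"
  define p where "p = m *\<^sub>R w + a *\<^sub>R u"
  have "w \<bullet> w = 1"
    using w by (simp add: norm_eq_1)
  then have pw: "p \<bullet> w = m" and pu: "p \<bullet> u = a" and pp: "perp_part u p = m *\<^sub>R w"
    using wu u unfolding p_def
    by (simp_all add: inner_add_scaleR_orth inner_add_scaleR_unit perp_part_add_scaleR_unit[OF u])
  have "x \<in> sheared_cylinder u w h - sheared_cylinder u w G" if "x \<in> ball p (e/4)" for x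
  proof -
    define d where "d = x - p"
    have nd: "norm d < e/4"
      using that by (simp add: d_def dist_norm norm_minus_commute)
    have xw: "\<bar>x \<bullet> w - m\<bar> \<le> norm d" and xu: "\<bar>x \<bullet> u - a\<bar> \<le> norm d"
      using abs_inner_le_norm_unit[OF w, of d] abs_inner_le_norm_unit[OF u, of d] pw pu
      by (simp_all add: d_def inner_diff_left)
    have "perp_part u x = perp_part u p + perp_part u d"
      by (simp add: d_def algebra_simps inner_diff_left)
    then have "norm (perp_part u x) \<le> \<bar>m\<bar> + norm d"
      using norm_triangle_ineq[of "perp_part u p" "perp_part u d"] norm_perp_part_le[OF u, of d] pp w
      by simp
    then have "norm (perp_part u x) \<le> 1"
      using m nd e by linarith
    moreover have "\<bar>G (x \<bullet> w) - G m\<bar> \<le> norm d" "\<bar>h (x \<bullet> w) - h m\<bar> \<le> norm d"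
      using G[of "x \<bullet> w" m] h[of "x \<bullet> w" m] xw by linarith+
    then have "\<bar>x \<bullet> u - h (x \<bullet> w)\<bar> \<le> 1" "\<not> \<bar>x \<bullet> u - G (x \<bullet> w)\<bar> \<le> 1"
      using xu nd e gap unfolding a_def abs_le_iff by (auto split: if_splits)
    ultimately show ?thesis
      by (simp add: sheared_cylinder_def)
  qed
  then show thesis
    using that by blast
qed

section \<open>Weak approximability\<close>

lemma emeasure_le_ind_L1_dist:
  assumes "C \<in> sets lebesgue" and "C \<subseteq> (A - B) \<union> (B - A)"
  shows "emeasure lebesgue C \<le> ind_L1_dist A B"
proof -
  have "emeasure lebesgue C = (\<integral>\<^sup>+ x. indicator C x \<partial>lebesgue)"
    using assms(1) by simp
  also have "\<dots> \<le> ind_L1_dist A B"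
    unfolding ind_L1_dist_def
    by (rule nn_integral_mono) (use assms(2) in \<open>auto simp: indicator_def\<close>)
  finally show ?thesis .
qed

lemma not_weakly_approximable_if_L1_gap:
  assumes "A \<in> E" and "0 < \<delta>" and gap: "\<And>F. F \<in> G \<Longrightarrow> \<delta> \<le> ind_L1_dist (F A) (D A)"
  shows "\<not> weakly_approximable E G D"
proof
  assume "weakly_approximable E G D"
  then obtain F where F: "\<forall>k. F k \<in> G" and lim: "(\<lambda>k. ind_L1_dist (F k A) (D A)) \<longlonglongrightarrow> 0"
    using \<open>A \<in> E\<close> unfolding weakly_approximable_def by blast
  have "\<forall>\<^sub>F k in sequentially. ind_L1_dist (F k A) (D A) < \<delta>"
    using lim \<open>0 < \<delta>\<close> by (rule order_tendstoD(2))
  then obtain k where "ind_L1_dist (F k A) (D A) < \<delta>"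
    unfolding eventually_sequentially by blast
  moreover have "\<delta> \<le> ind_L1_dist (F k A) (D A)"
    using gap F by blast
  ultimately show False
    by simp
qed

lemma ind_L1_dist_polar_comp_brock_sheared_cylinder_ge:
  fixes u w :: "'a::euclidean_space"
  assumes u: "norm u = 1" and w: "norm w = 1" and wu: "w \<bullet> u = 0"
    and b: "0 < b" "b < 1" and F: "F \<in> parallel_polar_comps u"
  defines "K \<equiv> sheared_cylinder u w (\<lambda>m. m)"
  shows "emeasure lebesgue (ball (0::'a) (b * (1 - b) / 32)) \<le> ind_L1_dist (F K) (brock u t0 b K)"
proof -
  define e where "e = b * (1 - b) / 8"
  have "b * (1 - b) \<le> 1"
    using b by (intro mult_le_one) auto
  then have e: "0 < e" "e \<le> 1"
    using b by (simp_all add: e_def)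
  have brock_nonexpanding: "\<bar>((1 - b) * t0 + b * x) - ((1 - b) * t0 + b * y)\<bar> \<le> \<bar>x - y\<bar>" for x y
  proof -
    have "\<bar>((1 - b) * t0 + b * x) - ((1 - b) * t0 + b * y)\<bar> = \<bar>b * (x - y)\<bar>"
      by (simp add: algebra_simps)
    also have "\<dots> \<le> \<bar>x - y\<bar>"
      unfolding abs_mult using b by (intro mult_left_le_one_le) auto
    finally show ?thesis .
  qed
  obtain hs where F: "F = polar_comp hs" and hs: "\<forall>(v, s) \<in> set hs. v = u \<or> v = - u"
    using F unfolding parallel_polar_comps_def by blast
  have "\<exists>m\<in>{-1/2..1/2}. e \<le> \<bar>fold_comp u hs m - ((1 - b) * t0 + b * m)\<bar>"
    unfolding e_def by (rule fold_comp_far_from_affine[OF b])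
  then obtain m where "m \<in> {-1/2..1/2}" and gap: "e \<le> \<bar>fold_comp u hs m - ((1 - b) * t0 + b * m)\<bar>"
    by blast
  then have "\<bar>m\<bar> \<le> 1/2"
    by (simp add: abs_if)
  then obtain p where "ball p (e/4) \<subseteq>
      sheared_cylinder u w (\<lambda>m. (1 - b) * t0 + b * m) - sheared_cylinder u w (fold_comp u hs)"
    by (rule sheared_cylinder_diff_contains_ball[OF u w wu _ e gap fold_comp_nonexpanding brock_nonexpanding])
  then have "emeasure lebesgue (ball p (e/4)) \<le> ind_L1_dist (F K) (brock u t0 b K)"
    unfolding K_def F brock_sheared_cylinder[OF u wu] polar_comp_sheared_cylinder[OF u wu hs]
    by (intro emeasure_le_ind_L1_dist) auto
  then show ?thesis
    using e by (simp add: emeasure_ball e_def)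
qed

theorem corollary6p8:
  fixes u :: "'a::euclidean_space" and t0 b :: real
  assumes "DIM('a) \<ge> 2"
    and "norm u = 1"
    and "0 < b" and "b < 1"
  shows "\<not> weakly_approximable {K. convex_body K} (parallel_polar_comps u) (brock u t0 b)"
proof -
  obtain y :: 'a where "y \<noteq> 0" "orthogonal u y"
    using orthogonal_to_vector_exists[OF assms(1)] by blast
  define w where "w = y /\<^sub>R norm y"
  have w: "norm w = 1" and wu: "w \<bullet> u = 0"
    using \<open>y \<noteq> 0\<close> \<open>orthogonal u y\<close> by (simp_all add: w_def orthogonal_def inner_commute)
  have "0 < b * (1 - b) / 32"
    using assms(3,4) by simp
  then show ?thesis
    using convex_body_sheared_cylinder[OF \<open>norm u = 1\<close> w wu]
      ind_L1_dist_polar_comp_brock_sheared_cylinder_ge[OF \<open>norm u = 1\<close> w wu assms(3,4)]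
    by (intro not_weakly_approximable_if_L1_gap[of "sheared_cylinder u w (\<lambda>m. m)"])
      (auto simp: emeasure_ball)
qed

end
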